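(* Let $C$ be a GHZ-preparation circuit on a set of qubits, built as follows: all qubits start in $\ket{0}$, a root qubit $v_0$ is put in the state $\ket{+}$ by a Hadamard gate, and then, layer by layer, CNOT gates are applied whose control is a qubit that has already been excited (entangled) and whose target is a qubit that has not yet been excited, so that every qubit is eventually excited and the ideal output is $\frac{1}{\sqrt 2}(\ket{0}^{\otimes n}+\ket{1}^{\otimes n})$. Suppose the gates and idle timesteps of $C$ form a rooted tree $T=(V,E)$ (the spacetime tree described in the context). For two qubits $i,j$, identified with the leaves of $T$ at the end of the circuit, define the edge set $$S_{i,j} := \mathrm{path}(i,\mathrm{lca}(i,j)) \cup \mathrm{path}(j,\mathrm{lca}(i,j)) \subseteq E,$$ where $\mathrm{lca}(i,j)$ is the lowest common ancestor of $i$ and $j$ in $T$ and $\mathrm{path}(a,b)$ is the set of edges of the unique path in $T$ from $a$ to $b$. Then a single-qubit $X$ or $Y$ error at a spacetime location $(q,t)$ of $C$ is detected by the measurement of $Z_iZ_j$ at the end of $C$ if and only if its corresponding edge in $T$ lies in $S_{i,j}$.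
   Context: Spacetime locations of $C$ are pairs $(q,t)$ with $q$ a qubit and $t$ a layer (timestep) of the circuit; errors are only considered at error-eligible locations, namely $(q,t)$ with $t\ge l_q$, where $l_q$ is the first layer in which qubit $q$ is excited (before that the qubit is in the ground state). The rooted tree $T$ has as root the root qubit at its excitation, its vertices are the excited spacetime locations, and its edges are the wire segments of a qubit between consecutive layers (idle timesteps or continuation through a gate) together with the CNOT links from control to newly excited target; each error-eligible spacetime location $(q,t)$ thus corresponds to an edge of $T$, and the final-time vertex of each qubit is a leaf. A single-qubit Pauli error $E$ at location $(q,t)$ is "detected" by the final measurement of $Z_iZ_j$ if it flips the outcome of that measurement relative to the error-free circuit (for the ideal GHZ state the outcome is $+1$), equivalently if $E$ anticommutes with the operator obtained by propagating $Z_iZ_j$ backwards through the circuit to that location. *)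

theory Defs
  imports Main
begin

text \<open>A circuit is given by a root qubit v0 (put into |+> by a Hadamard gate at
time 0) and a list of layers; layer number t+1 (t < length Ls) is the list
Ls ! t of CNOT gates (control, target). Time t (0 <= t <= D, D = length Ls) denotes the moment right after
layer t (time 0: right after the Hadamard on the root).\<close>

type_synonym 'q layer = "('q \<times> 'q) list"

definition excited :: "'q \<Rightarrow> 'q layer list \<Rightarrow> nat \<Rightarrow> 'q set" where
  "excited v0 Ls t = insert v0 (snd ` set (concat (take t Ls)))"

definition exc_time :: "'q \<Rightarrow> 'q layer list \<Rightarrow> 'q \<Rightarrow> nat" where
  "exc_time v0 Ls q = (LEAST t. q \<in> excited v0 Ls t)"

definition ghz_circuit :: "'q::finite \<Rightarrow> 'q layer list \<Rightarrow> bool" where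
  "ghz_circuit v0 Ls \<longleftrightarrow>
     (\<forall>t < length Ls. \<forall>(c, x) \<in> set (Ls ! t).
         c \<in> excited v0 Ls t \<and> x \<notin> excited v0 Ls t) \<and>
     (\<forall>t < length Ls. distinct (concat (map (\<lambda>(c, x). [c, x]) (Ls ! t)))) \<and>
     excited v0 Ls (length Ls) = UNIV"

text \<open>A Pauli operator up to phase is given by its X-part and Z-part.\<close>
type_synonym 'q pauli = "('q \<Rightarrow> bool) \<times> ('q \<Rightarrow> bool)"

definition anticommute :: "'q::finite pauli \<Rightarrow> 'q pauli \<Rightarrow> bool" where
  "anticommute P R \<longleftrightarrow>
     odd (card {p. fst P p \<and> snd R p} + card {p. snd P p \<and> fst R p})"

text \<open>Conjugation by CNOT(c,x) (self-inverse): X_c -> X_c X_x, Z_x -> Z_c Z_x.\<close>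
definition cnot_conj :: "'q \<times> 'q \<Rightarrow> 'q pauli \<Rightarrow> 'q pauli" where
  "cnot_conj g P = (case g of (c, x) \<Rightarrow>
      ((fst P)(x := (fst P x \<noteq> fst P c)), (snd P)(c := (snd P c \<noteq> snd P x))))"

definition layer_conj :: "'q layer \<Rightarrow> 'q pauli \<Rightarrow> 'q pauli" where
  "layer_conj L P = fold cnot_conj L P"

text \<open>Propagate an operator at the end of the circuit backwards to time t,
i.e. through layers D, D-1, ..., t+1.\<close>
definition backprop :: "'q layer list \<Rightarrow> nat \<Rightarrow> 'q pauli \<Rightarrow> 'q pauli" where
  "backprop Ls t P = fold layer_conj (rev (drop t Ls)) P"

definition ZZ :: "'q \<Rightarrow> 'q \<Rightarrow> 'q pauli" where
  "ZZ i j = ((\<lambda>_. False), (\<lambda>p. (p = i) \<noteq> (p = j)))"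

definition X_at :: "'q \<Rightarrow> 'q pauli" where
  "X_at q = ((\<lambda>p. p = q), (\<lambda>_. False))"

definition Y_at :: "'q \<Rightarrow> 'q pauli" where
  "Y_at q = ((\<lambda>p. p = q), (\<lambda>p. p = q))"

definition detected :: "'q::finite layer list \<Rightarrow> 'q pauli \<Rightarrow> nat \<Rightarrow> 'q \<Rightarrow> 'q \<Rightarrow> bool" where
  "detected Ls E t i j \<longleftrightarrow> anticommute E (backprop Ls t (ZZ i j))"

text \<open>Vertices: excited spacetime locations Loc q t, plus an extra vertex Start
(the Hadamard preparation) below the root Loc v0 0, so that the root location
(v0,0) also corresponds to an edge.\<close>
datatype 'q node = Start | Loc 'q nat

definition tree_edges :: "'q \<Rightarrow> 'q layer list \<Rightarrow> 'q node set set" where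
  "tree_edges v0 Ls =
     {{Start, Loc v0 0}}
     \<union> {{Loc q t, Loc q (Suc t)} | q t. exc_time v0 Ls q \<le> t \<and> t < length Ls}
     \<union> {{Loc c t, Loc x (Suc t)} | c x t. t < length Ls \<and> (c, x) \<in> set (Ls ! t)}"

definition simple_path :: "'v set set \<Rightarrow> 'v \<Rightarrow> 'v \<Rightarrow> 'v list \<Rightarrow> bool" where
  "simple_path G a b p \<longleftrightarrow> p \<noteq> [] \<and> hd p = a \<and> last p = b \<and> distinct p \<and>
     (\<forall>k. Suc k < length p \<longrightarrow> {p ! k, p ! Suc k} \<in> G)"

definition walk_edges :: "'v list \<Rightarrow> 'v set set" where
  "walk_edges p = {{p ! k, p ! Suc k} | k. Suc k < length p}"

definition path_edges :: "'v set set \<Rightarrow> 'v \<Rightarrow> 'v \<Rightarrow> 'v set set" where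
  "path_edges G a b = \<Union> {walk_edges p | p. simple_path G a b p}"

definition ancestor :: "'v set set \<Rightarrow> 'v \<Rightarrow> 'v \<Rightarrow> 'v \<Rightarrow> bool" where
  "ancestor G r a v \<longleftrightarrow> (\<exists>p. simple_path G r v p \<and> a \<in> set p)"

definition lca :: "'v set set \<Rightarrow> 'v \<Rightarrow> 'v \<Rightarrow> 'v \<Rightarrow> 'v" where
  "lca G r u v = (THE w. ancestor G r w u \<and> ancestor G r w v \<and>
      (\<forall>w'. ancestor G r w' u \<and> ancestor G r w' v \<longrightarrow> ancestor G r w' w))"

definition loc_edge :: "'q \<Rightarrow> 'q layer list \<Rightarrow> 'q \<Rightarrow> nat \<Rightarrow> 'q node set" where
  "loc_edge v0 Ls q t = (THE e. e \<in> path_edges (tree_edges v0 Ls) Start (Loc q t)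
                                 \<and> Loc q t \<in> e)"

definition S_set :: "'q \<Rightarrow> 'q layer list \<Rightarrow> 'q \<Rightarrow> 'q \<Rightarrow> 'q node set set" where
  "S_set v0 Ls i j =
     (let T = tree_edges v0 Ls; D = length Ls;
          w = lca T (Loc v0 0) (Loc i D) (Loc j D)
      in path_edges T (Loc i D) w \<union> path_edges T (Loc j D) w)"

end

theory Submission
  imports Defs
begin

text \<open>Every excited location u other than the root location has a parent in the spacetime tree:
the previous location of the same qubit if that qubit was already excited, and otherwise the control
of the CNOT exciting it. The tree edge of u is therefore {parent u, u}, and this edge lies on the
path between two vertices iff exactly one of them lies in the subtree below u; for the leaves of
i and j this is membership in S_{i,j}.

On the circuit side, propagating a Z-string backwards through CNOTs keeps it a Z-string, and by
induction over the layers its Z-part at (q,t) is the parity of the number of its qubits whose leaf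
lies below (q,t): the CNOT (c,x) maps Z_c to Z_c Z_x, just as the leaves below (c,t) split into
those below (c,t+1) and below (x,t+1). An X or Y error at q anticommutes with a Z-string iff
the string acts on q, so for Z_i Z_j detection means that exactly one of the leaves of i and j
lies below (q,t).\<close>

subsection \<open>Walks in a graph given by its edge set\<close>

lemma walk_edges_Nil [simp]: "walk_edges [] = {}"
  by (auto simp: walk_edges_def)

lemma walk_edges_singleton [simp]: "walk_edges [x] = {}"
  by (auto simp: walk_edges_def)

lemma walk_edges_Cons_Cons [simp]:
  "walk_edges (x # y # p) = insert {x, y} (walk_edges (y # p))"
  unfolding walk_edges_def
  by (auto simp: less_Suc_eq_0_disj) (metis nth_Cons_0, metis nth_Cons_Suc)

lemma walk_edges_rev [simp]: "walk_edges (rev p) = walk_edges p"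
proof -
  have "walk_edges (rev p) \<subseteq> walk_edges p" for p :: "'a list"
  proof
    fix e assume "e \<in> walk_edges (rev p)"
    then obtain k where k: "Suc k < length p" "e = {rev p ! k, rev p ! Suc k}"
      by (auto simp: walk_edges_def)
    define k' where "k' = length p - 2 - k"
    have "rev p ! k = p ! Suc k'" "rev p ! Suc k = p ! k'"
      using k by (auto simp: rev_nth k'_def Suc_diff_Suc)
    with k show "e \<in> walk_edges p"
      unfolding walk_edges_def k'_def by force
  qed
  from this[of p] this[of "rev p"] show ?thesis by auto
qed

lemma walk_edges_subset_set: "e \<in> walk_edges p \<Longrightarrow> e \<subseteq> set p"
  by (auto simp: walk_edges_def)

lemma simple_path_iff_walk_edges:
  "simple_path G a b p \<longleftrightarrow>
     p \<noteq> [] \<and> hd p = a \<and> last p = b \<and> distinct p \<and> walk_edges p \<subseteq> G"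
  by (auto simp: simple_path_def walk_edges_def)

lemma simple_path_rev: "simple_path G a b p \<Longrightarrow> simple_path G b a (rev p)"
  by (auto simp: simple_path_iff_walk_edges hd_rev last_rev)

lemma path_edges_commute: "path_edges G a b = path_edges G b a"
proof -
  have "path_edges G a b \<subseteq> path_edges G b a" for a b
    unfolding path_edges_def using simple_path_rev walk_edges_rev by fastforce
  then show ?thesis by blast
qed

subsection \<open>Trees given by a parent function\<close>

definition parent_edges :: "('v \<Rightarrow> 'v) \<Rightarrow> 'v set \<Rightarrow> 'v set set" where
  "parent_edges par W = {{par w, w} | w. w \<in> W}"

definition descendants :: "('v \<Rightarrow> 'v) \<Rightarrow> 'v \<Rightarrow> 'v set" where
  "descendants par u = {v. \<exists>n. (par ^^ n) v = u}"

definition ancestor_walk :: "('v \<Rightarrow> 'v) \<Rightarrow> 'v \<Rightarrow> nat \<Rightarrow> 'v list" where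
  "ancestor_walk par v n = map (\<lambda>k. (par ^^ k) v) [0..<Suc n]"

text \<open>The vertices are W and a base vertex of level 0; the root is the only vertex of W at
level 1, so the base hangs below the root by one extra edge.\<close>

locale parent_tree =
  fixes par :: "'v \<Rightarrow> 'v" and lvl :: "'v \<Rightarrow> nat" and W :: "'v set" and base root :: 'v
  assumes level_parent: "lvl (par v) = lvl v - 1"
    and level_zero: "lvl v = 0 \<Longrightarrow> v = base"
    and level_pos: "w \<in> W \<Longrightarrow> 0 < lvl w"
    and parent_in_vertices: "w \<in> W \<Longrightarrow> 0 < lvl (par w) \<Longrightarrow> par w \<in> W"
    and level_one: "w \<in> W \<Longrightarrow> lvl w = 1 \<Longrightarrow> w = root"
    and root_in_vertices: "root \<in> W"
    and level_root: "lvl root = 1"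
begin

abbreviation "edges \<equiv> parent_edges par W"
abbreviation "desc \<equiv> descendants par"

lemma level_funpow: "lvl ((par ^^ n) v) = lvl v - n"
  by (induction n) (auto simp: level_parent)

lemma funpow_in_vertices: "v \<in> W \<Longrightarrow> 0 < lvl ((par ^^ n) v) \<Longrightarrow> (par ^^ n) v \<in> W"
  by (induction n) (auto simp: level_parent parent_in_vertices)

lemma descendants_refl [simp]: "u \<in> desc u"
  unfolding descendants_def by (rule CollectI, rule exI[of _ 0]) simp

lemma descendants_parentI: "w \<in> desc u \<Longrightarrow> w \<noteq> u \<Longrightarrow> par w \<in> desc u"
proof -
  assume "w \<in> desc u" "w \<noteq> u"
  then obtain n where n: "(par ^^ n) w = u" by (auto simp: descendants_def)
  with \<open>w \<noteq> u\<close> obtain m where "n = Suc m" by (cases n) auto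
  with n have "(par ^^ Suc m) w = u" by simp
  then have "(par ^^ m) (par w) = u" by (simp add: funpow_Suc_right del: funpow.simps)
  then show ?thesis by (auto simp: descendants_def)
qed

lemma descendants_parentD: "par w \<in> desc u \<Longrightarrow> w \<in> desc u"
proof -
  assume "par w \<in> desc u"
  then obtain n where "(par ^^ n) (par w) = u" by (auto simp: descendants_def)
  then have "(par ^^ Suc n) w = u" by (simp add: funpow_Suc_right del: funpow.simps)
  then show ?thesis unfolding descendants_def by blast
qed

lemma parent_in_descendants_iff: "w \<noteq> u \<Longrightarrow> par w \<in> desc u \<longleftrightarrow> w \<in> desc u"
  using descendants_parentI descendants_parentD by blast

lemma descendants_trans: "x \<in> desc y \<Longrightarrow> y \<in> desc z \<Longrightarrow> x \<in> desc z"
  unfolding descendants_def by clarify (metis funpow_add comp_apply)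

lemma descendants_level_le: "x \<in> desc y \<Longrightarrow> lvl y \<le> lvl x"
  unfolding descendants_def using level_funpow by auto

lemma parent_notin_descendants: "0 < lvl u \<Longrightarrow> par u \<notin> desc u"
  using descendants_level_le[of "par u" u] level_parent[of u] by linarith

lemma descendants_level_eq:
  assumes "x \<in> desc y" "lvl x = lvl y"
  shows "x = y"
proof -
  obtain n where n: "(par ^^ n) x = y" using assms(1) by (auto simp: descendants_def)
  show ?thesis
  proof (cases "lvl x = 0")
    case True
    then show ?thesis using assms(2) level_zero by metis
  next
    case False
    have "lvl y = lvl x - n" using n level_funpow by metis
    then have "n = 0" using assms(2) False by linarith
    then show ?thesis using n by simp
  qed
qed

lemma descendants_same_level:
  assumes "v \<in> desc a" "v \<in> desc b" "lvl a = lvl b" "0 < lvl a"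
  shows "a = b"
proof -
  obtain n m where n: "(par ^^ n) v = a" and m: "(par ^^ m) v = b"
    using assms(1,2) by (auto simp: descendants_def)
  have "lvl v - n = lvl v - m" "0 < lvl v - n"
    using assms(3,4) n m level_funpow by metis+
  then have "n = m" by linarith
  then show ?thesis using n m by simp
qed

text \<open>Every edge other than {par u, u} has both or neither endpoint below u, so along a walk
membership below u changes exactly when that edge is crossed; a simple walk crosses it at most
once.\<close>

lemma parent_edge_in_walk_iff:
  assumes "distinct p" "walk_edges p \<subseteq> edges" "p \<noteq> []" "0 < lvl u"
  shows "{par u, u} \<in> walk_edges p \<longleftrightarrow> (hd p \<in> desc u) \<noteq> (last p \<in> desc u)"
  using assms
proof (induction p rule: induct_list012)
  case (3 x y p)
  have IH: "{par u, u} \<in> walk_edges (y # p) \<longleftrightarrow> (y \<in> desc u) \<noteq> (last (y # p) \<in> desc u)"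
    using "3.IH"(2) "3.prems" by simp
  have xy: "{x, y} \<in> edges" using "3.prems"(2) by simp
  show ?case
  proof (cases "{x, y} = {par u, u}")
    case True
    have "{par u, u} \<notin> walk_edges (y # p)"
    proof
      assume "{par u, u} \<in> walk_edges (y # p)"
      then have "x \<in> set (y # p)" using True walk_edges_subset_set by blast
      then show False using "3.prems"(1) by simp
    qed
    moreover have "(x \<in> desc u) \<noteq> (y \<in> desc u)"
      using True parent_notin_descendants[OF "3.prems"(4)] descendants_refl[of u]
      unfolding doubleton_eq_iff by blast
    ultimately show ?thesis using IH True by simp
  next
    case False
    obtain w where w: "{x, y} = {par w, w}" "w \<in> W"
      using xy by (auto simp: parent_edges_def)
    with False have "w \<noteq> u" by blast
    with w(1) have "(x \<in> desc u) \<longleftrightarrow> (y \<in> desc u)"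
      unfolding doubleton_eq_iff using parent_in_descendants_iff by blast
    then show ?thesis using IH False by simp
  qed
qed simp_all

lemma ancestor_walk_nth: "k \<le> n \<Longrightarrow> ancestor_walk par v n ! k = (par ^^ k) v"
  unfolding ancestor_walk_def by (simp del: upt_Suc add: nth_map_upt)

lemma length_ancestor_walk [simp]: "length (ancestor_walk par v n) = Suc n"
  unfolding ancestor_walk_def by simp

lemma simple_path_ancestor_walk:
  assumes v: "v \<in> W" "n \<le> lvl v"
  shows "simple_path edges v ((par ^^ n) v) (ancestor_walk par v n)"
  unfolding simple_path_def
proof (intro conjI allI impI)
  show ne: "ancestor_walk par v n \<noteq> []"
    by (simp add: ancestor_walk_def del: upt_Suc)
  show "hd (ancestor_walk par v n) = v"
    using ne ancestor_walk_nth[of 0 n v] by (simp add: hd_conv_nth)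
  show "last (ancestor_walk par v n) = (par ^^ n) v"
    using ne ancestor_walk_nth[of n n v] by (simp add: last_conv_nth)
  have "inj_on (\<lambda>k. (par ^^ k) v) {0..<Suc n}"
  proof (rule inj_onI)
    fix a b assume ab: "a \<in> {0..<Suc n}" "b \<in> {0..<Suc n}" "(par ^^ a) v = (par ^^ b) v"
    then have "lvl v - a = lvl v - b" using level_funpow by metis
    then show "a = b" using ab v by auto
  qed
  then show "distinct (ancestor_walk par v n)"
    unfolding ancestor_walk_def by (simp add: distinct_map del: upt_Suc)
next
  fix k assume k: "Suc k < length (ancestor_walk par v n)"
  then have "0 < lvl ((par ^^ k) v)" using v level_funpow by simp
  then have "(par ^^ k) v \<in> W" using funpow_in_vertices v by blast
  then show "{ancestor_walk par v n ! k, ancestor_walk par v n ! Suc k} \<in> edges"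
    using k by (auto simp: ancestor_walk_nth parent_edges_def)
qed

lemma path_edges_subset_edges: "path_edges edges a b \<subseteq> edges"
  unfolding path_edges_def by (auto simp: simple_path_iff_walk_edges)

lemma parent_edge_in_path_edges_iff:
  assumes "a \<in> W" "n \<le> lvl a" "0 < lvl u"
  shows "{par u, u} \<in> path_edges edges a ((par ^^ n) a)
    \<longleftrightarrow> (a \<in> desc u) \<noteq> ((par ^^ n) a \<in> desc u)"
proof -
  have "simple_path edges a ((par ^^ n) a) (ancestor_walk par a n)"
    using simple_path_ancestor_walk assms by simp
  then show ?thesis
    using parent_edge_in_walk_iff assms(3) unfolding path_edges_def
    by (auto simp: simple_path_iff_walk_edges)
qed

lemma funpow_level_root:
  assumes v: "v \<in> W"
  shows "(par ^^ (lvl v - 1)) v = root"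
proof -
  have l: "lvl ((par ^^ (lvl v - 1)) v) = 1" using level_pos[OF v] level_funpow by simp
  then have "(par ^^ (lvl v - 1)) v \<in> W" using funpow_in_vertices v by simp
  then show ?thesis using level_one l by blast
qed

lemma descendants_root: "v \<in> W \<Longrightarrow> v \<in> desc root"
  using funpow_level_root unfolding descendants_def by blast

lemma descendants_in_vertices: "v \<in> W \<Longrightarrow> v \<in> desc a \<Longrightarrow> 0 < lvl a \<Longrightarrow> a \<in> W"
  unfolding descendants_def using funpow_in_vertices by blast

lemma parent_edge_on_root_path:
  assumes p: "simple_path edges root v p" and v: "v \<in> W"
    and w: "w \<in> W" "{par w, w} \<in> walk_edges p"
  shows "v \<in> desc w" "w \<noteq> root"
proof -
  from p have p': "distinct p" "walk_edges p \<subseteq> edges" "p \<noteq> []" "hd p = root" "last p = v"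
    by (simp_all add: simple_path_iff_walk_edges)
  have sep: "(root \<in> desc w) \<noteq> (v \<in> desc w)"
    using parent_edge_in_walk_iff[OF p'(1-3) level_pos[OF w(1)]] w(2) p'(4,5) by simp
  then show "w \<noteq> root" using descendants_root[OF v] by auto
  moreover have "root \<notin> desc w"
  proof
    assume "root \<in> desc w"
    then have "lvl w \<le> 1" using descendants_level_le level_root by metis
    then have "w = root" using level_one w(1) level_pos[OF w(1)] by simp
    with sep show False using descendants_root[OF v] by simp
  qed
  ultimately show "v \<in> desc w" using sep by simp
qed

lemma vertex_on_root_path:
  assumes p: "simple_path edges root v p" and v: "v \<in> W" and a: "a \<in> set p"
  shows "v \<in> desc a \<and> 0 < lvl a"
proof -
  obtain m where m: "m < length p" "p ! m = a" using a by (auto simp: in_set_conv_nth)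
  show ?thesis
  proof (cases "Suc m = length p")
    case True
    then have "m = length p - 1" by simp
    then have "a = v" using m p by (auto simp: simple_path_def last_conv_nth)
    then show ?thesis using level_pos v by auto
  next
    case False
    then have e: "{p ! m, p ! Suc m} \<in> walk_edges p" using m by (auto simp: walk_edges_def)
    then have "{p ! m, p ! Suc m} \<in> edges" using p by (auto simp: simple_path_iff_walk_edges)
    then obtain w where w: "{p ! m, p ! Suc m} = {par w, w}" "w \<in> W"
      by (auto simp: parent_edges_def)
    with e have "{par w, w} \<in> walk_edges p" by simp
    note vw = parent_edge_on_root_path[OF p v w(2) this]
    have "a = par w \<or> a = w" using w m by (auto simp: doubleton_eq_iff)
    then show ?thesis
    proof
      assume "a = w" then show ?thesis using vw(1) level_pos[OF w(2)] by simp
    next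
      assume a: "a = par w"
      have "w \<in> desc (par w)" using descendants_parentD[of w "par w"] by simp
      then have "v \<in> desc a" using a descendants_trans vw(1) by blast
      moreover have "lvl w \<noteq> 1" using level_one w(2) vw(2) by blast
      then have "0 < lvl a" using a level_pos[OF w(2)] level_parent[of w] by simp
      ultimately show ?thesis by simp
    qed
  qed
qed

lemma ancestor_iff_descendants:
  assumes v: "v \<in> W"
  shows "ancestor edges root a v \<longleftrightarrow> v \<in> desc a \<and> 0 < lvl a"
proof
  assume "ancestor edges root a v"
  then show "v \<in> desc a \<and> 0 < lvl a"
    using vertex_on_root_path[OF _ v] by (auto simp: ancestor_def)
next
  assume a: "v \<in> desc a \<and> 0 < lvl a"
  then obtain n where n: "(par ^^ n) v = a" by (auto simp: descendants_def)
  have "lvl a = lvl v - n" using n level_funpow by metis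
  then have nl: "n \<le> lvl v - 1" using a by auto
  have "a \<in> set (ancestor_walk par v (lvl v - 1))"
    using ancestor_walk_nth[OF nl, of v] n nl
    by (metis le_imp_less_Suc length_ancestor_walk nth_mem)
  moreover have "simple_path edges root v (rev (ancestor_walk par v (lvl v - 1)))"
    using simple_path_rev[OF simple_path_ancestor_walk[OF v diff_le_self[of _ 1]]]
    unfolding funpow_level_root[OF v] .
  ultimately show "ancestor edges root a v"
    unfolding ancestor_def by (intro exI[of _ "rev (ancestor_walk par v (lvl v - 1))"]) simp
qed

lemma descendants_iff_child:
  assumes v: "v \<in> W" and u: "0 < lvl u" "lvl u < lvl v"
  shows "v \<in> desc u \<longleftrightarrow> (\<exists>w \<in> W. par w = u \<and> v \<in> desc w)"
proof
  assume "v \<in> desc u"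
  then obtain n where n: "(par ^^ n) v = u" unfolding descendants_def by blast
  have l: "lvl u = lvl v - n" using n level_funpow by metis
  then obtain m where m: "n = Suc m" using u by (cases n) auto
  define w where "w = (par ^^ m) v"
  have "par w = u" using n m w_def by simp
  moreover have "0 < lvl w" using level_funpow[of m v] l m u w_def by simp
  then have "w \<in> W" using funpow_in_vertices[OF v] w_def by simp
  moreover have "v \<in> desc w" unfolding w_def descendants_def by blast
  ultimately show "\<exists>w \<in> W. par w = u \<and> v \<in> desc w" by blast
next
  assume "\<exists>w \<in> W. par w = u \<and> v \<in> desc w"
  then obtain w where w: "par w = u" "v \<in> desc w" by blast
  have "w \<in> desc u" using descendants_parentD[of w u] w(1) by simp
  then show "v \<in> desc u" using descendants_trans w(2) by blast
qed

lemma common_ancestor_deepest: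
  assumes v1: "v1 \<in> W" and v2: "v2 \<in> W"
  obtains w where "v1 \<in> desc w" "v2 \<in> desc w" "0 < lvl w"
    "\<And>w'. v1 \<in> desc w' \<Longrightarrow> v2 \<in> desc w' \<Longrightarrow> 0 < lvl w' \<Longrightarrow> w \<in> desc w'"
proof -
  define C where "C = {x. v1 \<in> desc x \<and> v2 \<in> desc x \<and> 0 < lvl x}"
  have "(par ^^ (lvl v1 - 1)) v1 \<in> C"
    using funpow_level_root[OF v1] descendants_root[OF v1] descendants_root[OF v2] level_root
    by (simp add: C_def)
  define n0 where "n0 = (LEAST n. (par ^^ n) v1 \<in> C)"
  define w where "w = (par ^^ n0) v1"
  have wC: "w \<in> C" unfolding w_def n0_def by (rule LeastI) fact
  have deepest: "w \<in> desc w'" if "w' \<in> C" for w'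
  proof -
    from that have "v1 \<in> desc w'" by (simp add: C_def)
    then obtain m where m: "(par ^^ m) v1 = w'" unfolding descendants_def by blast
    then have "n0 \<le> m" unfolding n0_def using that by (auto intro: Least_le)
    then have "(par ^^ (m - n0)) w = w'" using m unfolding w_def
      by (metis funpow_add comp_apply le_add_diff_inverse2)
    then show ?thesis by (auto simp: descendants_def)
  qed
  show ?thesis
  proof (rule that)
    show "v1 \<in> desc w" "v2 \<in> desc w" "0 < lvl w" using wC by (simp_all add: C_def)
    show "w \<in> desc w'" if "v1 \<in> desc w'" "v2 \<in> desc w'" "0 < lvl w'" for w'
      using deepest that by (simp add: C_def)
  qed
qed

lemma lca_eqI:
  assumes v1: "v1 \<in> W" and v2: "v2 \<in> W"
    and w: "v1 \<in> desc w" "v2 \<in> desc w" "0 < lvl w"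
    and deepest: "\<And>w'. v1 \<in> desc w' \<Longrightarrow> v2 \<in> desc w' \<Longrightarrow> 0 < lvl w' \<Longrightarrow> w \<in> desc w'"
  shows "lca edges root v1 v2 = w"
  unfolding lca_def
proof (rule the_equality)
  have wW: "w \<in> W" using descendants_in_vertices[OF v1 w(1,3)] .
  show "ancestor edges root w v1 \<and> ancestor edges root w v2 \<and>
      (\<forall>w'. ancestor edges root w' v1 \<and> ancestor edges root w' v2 \<longrightarrow> ancestor edges root w' w)"
    using w deepest ancestor_iff_descendants[OF v1] ancestor_iff_descendants[OF v2]
      ancestor_iff_descendants[OF wW] by auto
  fix w2 assume w2: "ancestor edges root w2 v1 \<and> ancestor edges root w2 v2 \<and>
      (\<forall>w'. ancestor edges root w' v1 \<and> ancestor edges root w' v2 \<longrightarrow> ancestor edges root w' w2)"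
  then have w2': "v1 \<in> desc w2" "v2 \<in> desc w2" "0 < lvl w2"
    using ancestor_iff_descendants[OF v1] ancestor_iff_descendants[OF v2] by auto
  then have "w2 \<in> W" using descendants_in_vertices[OF v1] by blast
  then have "w2 \<in> desc w"
    using w2 w ancestor_iff_descendants[OF v1] ancestor_iff_descendants[OF v2]
      ancestor_iff_descendants[of w2] by blast
  moreover have "w \<in> desc w2" using deepest w2' by blast
  ultimately show "w2 = w" using descendants_level_le descendants_level_eq by (metis le_antisym)
qed

lemma parent_edge_in_lca_paths_iff:
  assumes u: "u \<in> W" and v1: "v1 \<in> W" and v2: "v2 \<in> W"
  shows "{par u, u} \<in> path_edges edges v1 (lca edges root v1 v2)
           \<union> path_edges edges v2 (lca edges root v1 v2)
     \<longleftrightarrow> (v1 \<in> desc u) \<noteq> (v2 \<in> desc u)"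
proof -
  obtain w where w: "v1 \<in> desc w" "v2 \<in> desc w" "0 < lvl w"
    and deepest: "\<And>w'. v1 \<in> desc w' \<Longrightarrow> v2 \<in> desc w' \<Longrightarrow> 0 < lvl w' \<Longrightarrow> w \<in> desc w'"
    using common_ancestor_deepest[OF v1 v2] by blast
  have lca: "lca edges root v1 v2 = w" using lca_eqI[OF v1 v2 w deepest] .
  obtain n1 n2 where n1: "(par ^^ n1) v1 = w" and n2: "(par ^^ n2) v2 = w"
    using w by (auto simp: descendants_def)
  have "n1 \<le> lvl v1" "n2 \<le> lvl v2"
    using n1 n2 w(3) level_funpow[of n1 v1] level_funpow[of n2 v2] by simp_all
  then have "{par u, u} \<in> path_edges edges v1 w \<longleftrightarrow> (v1 \<in> desc u) \<noteq> (w \<in> desc u)"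
      "{par u, u} \<in> path_edges edges v2 w \<longleftrightarrow> (v2 \<in> desc u) \<noteq> (w \<in> desc u)"
    using parent_edge_in_path_edges_iff[OF v1 _ level_pos[OF u], of n1]
      parent_edge_in_path_edges_iff[OF v2 _ level_pos[OF u], of n2]
    unfolding n1 n2 by simp_all
  moreover have "w \<in> desc u \<longleftrightarrow> v1 \<in> desc u \<and> v2 \<in> desc u"
    using descendants_trans w deepest level_pos[OF u] by blast
  ultimately show ?thesis unfolding lca Un_iff by blast
qed

lemma path_edge_at_eq_parent_edge:
  assumes u: "u \<in> W"
  shows "(THE e. e \<in> path_edges edges base u \<and> u \<in> e) = {par u, u}"
proof -
  have base: "(par ^^ lvl u) u = base" using level_zero level_funpow by simp
  have base_notin: "base \<notin> desc w" if "w \<in> W" for w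
  proof
    assume "base \<in> desc w"
    then have "lvl w \<le> lvl base" by (rule descendants_level_le)
    moreover have "lvl base = 0" using base level_funpow[of "lvl u" u] by simp
    ultimately show False using level_pos[OF that] by simp
  qed
  have edge_iff: "{par w, w} \<in> path_edges edges base u \<longleftrightarrow> u \<in> desc w" if "w \<in> W" for w
    using parent_edge_in_path_edges_iff[OF u le_refl level_pos[OF that]] base_notin[OF that]
    unfolding base path_edges_commute[of _ base] by simp
  show ?thesis
  proof (rule the_equality)
    show "{par u, u} \<in> path_edges edges base u \<and> u \<in> {par u, u}"
      using edge_iff[OF u] by simp
  next
    fix e assume e: "e \<in> path_edges edges base u \<and> u \<in> e"
    then have "e \<in> edges" using path_edges_subset_edges by blast
    then obtain w where w: "e = {par w, w}" "w \<in> W" by (auto simp: parent_edges_def)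
    then have "u \<in> desc w" using e edge_iff by simp
    moreover have "u \<noteq> par w"
      using calculation descendants_level_le level_parent[of w] level_pos[OF w(2)] by fastforce
    ultimately show "e = {par u, u}" using e w by auto
  qed
qed

end

subsection \<open>Propagating Z-strings through layers of CNOTs\<close>

abbreviation layer_qubits :: "'q layer \<Rightarrow> 'q list" where
  "layer_qubits L \<equiv> concat (map (\<lambda>(c, x). [c, x]) L)"

lemma layer_gate_unique:
  assumes "distinct (layer_qubits L)" "(a, b) \<in> set L" "(a', b') \<in> set L" "a = a' \<or> b = b'"
  shows "(a, b) = (a', b')"
  using assms
proof (induction L)
  case (Cons g L)
  obtain c x where g: "g = (c, x)" by fastforce
  let ?Q = "set (layer_qubits L)"
  have mem: "u \<in> ?Q" "v \<in> ?Q" if "(u, v) \<in> set L" for u v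
    using that by force+
  have d: "c \<notin> ?Q" "x \<notin> ?Q" "distinct (layer_qubits L)"
    using Cons.prems(1) g by auto
  show ?case
    using Cons.prems(2-4) Cons.IH[OF d(3)] mem d(1,2) g by fastforce
qed simp

lemma layer_conj_Nil [simp]: "layer_conj [] P = P"
  by (simp add: layer_conj_def)

lemma layer_conj_Cons [simp]: "layer_conj (g # L) P = layer_conj L (cnot_conj g P)"
  by (simp add: layer_conj_def)

lemma cnot_conj_components [simp]:
  "fst (cnot_conj (c, x) P) = (fst P)(x := (fst P x \<noteq> fst P c))"
  "snd (cnot_conj (c, x) P) = (snd P)(c := (snd P c \<noteq> snd P x))"
  by (simp_all add: cnot_conj_def)

lemma fst_layer_conj_Z_string: "fst P = (\<lambda>_. False) \<Longrightarrow> fst (layer_conj L P) = (\<lambda>_. False)"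
proof (induction L arbitrary: P)
  case (Cons g L)
  then show ?case by (cases g) auto
qed simp

lemma snd_layer_conj_idle:
  "(\<forall>x. (p, x) \<notin> set L) \<Longrightarrow> snd (layer_conj L P) p = snd P p"
proof (induction L arbitrary: P)
  case (Cons g L)
  then show ?case by (cases g) auto
qed simp

lemma snd_layer_conj_control:
  "distinct (layer_qubits L) \<Longrightarrow> (p, x) \<in> set L \<Longrightarrow> snd (layer_conj L P) p = (snd P p \<noteq> snd P x)"
proof (induction L arbitrary: P)
  case (Cons g L)
  obtain c y where g: "g = (c, y)" by fastforce
  have d: "c \<notin> set (layer_qubits L)" "y \<notin> set (layer_qubits L)" "distinct (layer_qubits L)"
    using Cons.prems(1) g by auto
  show ?case
  proof (cases "(p, x) = g")
    case True
    have "\<forall>z. (c, z) \<notin> set L" using d(1) by force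
    then show ?thesis using True g Cons.prems(1) by (simp add: snd_layer_conj_idle)
  next
    case False
    then have pxL: "(p, x) \<in> set L" using Cons.prems(2) by simp
    then have "p \<noteq> c" "x \<noteq> c" using d(1) by force+
    then show ?thesis using Cons.IH[OF d(3) pxL, of "cnot_conj g P"] g by simp
  qed
qed simp

lemma backprop_Suc: "t < length Ls \<Longrightarrow> backprop Ls t P = layer_conj (Ls ! t) (backprop Ls (Suc t) P)"
  unfolding backprop_def by (simp add: Cons_nth_drop_Suc[symmetric])

lemma backprop_length [simp]: "backprop Ls (length Ls) P = P"
  unfolding backprop_def by simp

lemma fst_backprop_Z_string:
  assumes "fst P = (\<lambda>_. False)"
  shows "fst (backprop Ls t P) = (\<lambda>_. False)"
proof -
  have "fst (fold layer_conj Ms P) = (\<lambda>_. False)" for Ms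
    using assms by (induction Ms arbitrary: P) (simp_all add: fst_layer_conj_Z_string)
  then show ?thesis unfolding backprop_def .
qed

lemma anticommute_Z_string:
  assumes "fst R = (\<lambda>_. False)" "fst E = (\<lambda>p. p = q)"
  shows "anticommute E R \<longleftrightarrow> snd R q"
proof -
  have "{p. fst E p \<and> snd R p} = (if snd R q then {q} else {})" "{p. snd E p \<and> fst R p} = {}"
    using assms by auto
  then show ?thesis unfolding anticommute_def by (simp only:) simp
qed

lemma odd_card_ZZ:
  assumes "i \<noteq> j"
  shows "odd (card {k \<in> A. snd (ZZ i j) k}) \<longleftrightarrow> (i \<in> A) \<noteq> (j \<in> A)"
proof -
  have "{k \<in> A. snd (ZZ i j) k} = (if i \<in> A then {i} else {}) \<union> (if j \<in> A then {j} else {})"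
    using assms by (auto simp: ZZ_def)
  then show ?thesis using assms by auto
qed

subsection \<open>The spacetime tree of a GHZ-preparation circuit\<close>

lemma excited_mono: "s \<le> t \<Longrightarrow> excited v0 Ls s \<subseteq> excited v0 Ls t"
proof -
  assume "s \<le> t"
  then obtain k where "t = s + k" using le_Suc_ex by blast
  then show ?thesis unfolding excited_def by (auto simp: take_add)
qed

lemma excited_Suc:
  "t < length Ls \<Longrightarrow> excited v0 Ls (Suc t) = excited v0 Ls t \<union> snd ` set (Ls ! t)"
  unfolding excited_def by (auto simp: take_Suc_conv_app_nth)

lemma excited_beyond_length: "length Ls \<le> t \<Longrightarrow> excited v0 Ls t = excited v0 Ls (length Ls)"
  unfolding excited_def by simp

lemma excited_0 [simp]: "excited v0 Ls 0 = {v0}"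
  unfolding excited_def by simp

text \<open>A freshly excited qubit hangs below the control of the CNOT exciting it; the SOME
picks that control, which is unique by the distinctness of the qubits in a layer.\<close>

fun tree_parent :: "'q \<Rightarrow> 'q layer list \<Rightarrow> 'q node \<Rightarrow> 'q node" where
  "tree_parent v0 Ls Start = Start"
| "tree_parent v0 Ls (Loc q 0) = Start"
| "tree_parent v0 Ls (Loc q (Suc t)) =
     (if exc_time v0 Ls q \<le> t then Loc q t else Loc (SOME c. (c, q) \<in> set (Ls ! t)) t)"

fun node_level :: "'q node \<Rightarrow> nat" where
  "node_level Start = 0"
| "node_level (Loc q t) = Suc t"

definition tree_vertices :: "'q \<Rightarrow> 'q layer list \<Rightarrow> 'q node set" where
  "tree_vertices v0 Ls = {Loc q t | q t. exc_time v0 Ls q \<le> t \<and> t \<le> length Ls}"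

definition leaves_below :: "'q \<Rightarrow> 'q layer list \<Rightarrow> 'q node \<Rightarrow> 'q set" where
  "leaves_below v0 Ls u = {k. Loc k (length Ls) \<in> descendants (tree_parent v0 Ls) u}"

lemma root_edge_in_tree_edges: "{Start, Loc v0 0} \<in> tree_edges v0 Ls"
  unfolding tree_edges_def by (rule UnI1, rule UnI1) simp

lemma wire_edge_in_tree_edges:
  "exc_time v0 Ls q \<le> t \<Longrightarrow> t < length Ls \<Longrightarrow> {Loc q t, Loc q (Suc t)} \<in> tree_edges v0 Ls"
  unfolding tree_edges_def by (rule UnI1, rule UnI2) blast

lemma gate_edge_in_tree_edges:
  "t < length Ls \<Longrightarrow> (c, x) \<in> set (Ls ! t) \<Longrightarrow> {Loc c t, Loc x (Suc t)} \<in> tree_edges v0 Ls"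
  unfolding tree_edges_def by (rule UnI2) blast

locale ghz_prep_circuit =
  fixes v0 :: "'q::finite" and Ls :: "'q layer list"
  assumes ghz: "ghz_circuit v0 Ls"
begin

abbreviation "D \<equiv> length Ls"

lemma gate_excitation:
  assumes "t < D" "(c, x) \<in> set (Ls ! t)"
  shows "c \<in> excited v0 Ls t \<and> x \<notin> excited v0 Ls t"
proof -
  have "\<forall>t < D. \<forall>(c, x) \<in> set (Ls ! t). c \<in> excited v0 Ls t \<and> x \<notin> excited v0 Ls t"
    using ghz unfolding ghz_circuit_def by (elim conjE)
  then show ?thesis using assms by fastforce
qed

lemma distinct_layer_qubits: "t < D \<Longrightarrow> distinct (layer_qubits (Ls ! t))"
  using ghz unfolding ghz_circuit_def by (elim conjE) blast

lemma excited_length: "excited v0 Ls D = UNIV"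
  using ghz unfolding ghz_circuit_def by (elim conjE)

lemma excited_iff_exc_time: "q \<in> excited v0 Ls t \<longleftrightarrow> exc_time v0 Ls q \<le> t"
proof
  assume "q \<in> excited v0 Ls t"
  then show "exc_time v0 Ls q \<le> t" unfolding exc_time_def by (rule Least_le)
next
  assume le: "exc_time v0 Ls q \<le> t"
  have "q \<in> excited v0 Ls D" using excited_length by simp
  then have "q \<in> excited v0 Ls (exc_time v0 Ls q)" unfolding exc_time_def by (rule LeastI)
  then show "q \<in> excited v0 Ls t" using excited_mono[OF le, of v0 Ls] by blast
qed

lemma exc_time_root: "exc_time v0 Ls v0 = 0"
  using excited_iff_exc_time[of v0 0] by simp

lemma exc_time_eq_0: "exc_time v0 Ls q = 0 \<Longrightarrow> q = v0"
  using excited_iff_exc_time[of q 0] by simp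

lemma exc_time_target:
  assumes "t < D" "(c, x) \<in> set (Ls ! t)"
  shows "exc_time v0 Ls x = Suc t"
proof -
  have "x \<notin> excited v0 Ls t" using gate_excitation assms by blast
  moreover have "x \<in> excited v0 Ls (Suc t)" using excited_Suc[OF assms(1)] assms(2) by force
  ultimately show ?thesis using excited_iff_exc_time by (metis le_SucE)
qed

lemma exc_time_SucE:
  assumes "exc_time v0 Ls q = Suc t"
  obtains c where "t < D" "(c, q) \<in> set (Ls ! t)"
proof -
  have "q \<notin> excited v0 Ls t" and "q \<in> excited v0 Ls (Suc t)"
    using excited_iff_exc_time[of q t] excited_iff_exc_time[of q "Suc t"] assms by simp_all
  moreover have "t < D"
    using calculation excited_beyond_length[of Ls t v0] excited_beyond_length[of Ls "Suc t" v0]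
    by (metis not_less le_SucI)
  ultimately have "q \<in> snd ` set (Ls ! t)" using excited_Suc[of t Ls v0] by simp
  with \<open>t < D\<close> show ?thesis using that by force
qed

lemma control_of_target:
  "t < D \<Longrightarrow> (c, x) \<in> set (Ls ! t) \<Longrightarrow> (SOME c. (c, x) \<in> set (Ls ! t)) = c"
  using layer_gate_unique[OF distinct_layer_qubits] by (rule_tac some_equality) blast+

lemma tree_parent_target:
  "t < D \<Longrightarrow> (c, x) \<in> set (Ls ! t) \<Longrightarrow> tree_parent v0 Ls (Loc x (Suc t)) = Loc c t"
  using exc_time_target control_of_target by simp

lemma tree_parent_child_iff:
  assumes p: "exc_time v0 Ls p \<le> n" and n: "n < D"
  shows "w \<in> tree_vertices v0 Ls \<and> tree_parent v0 Ls w = Loc p n \<longleftrightarrow>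
     w = Loc p (Suc n) \<or> (\<exists>x. (p, x) \<in> set (Ls ! n) \<and> w = Loc x (Suc n))"
proof
  assume w: "w \<in> tree_vertices v0 Ls \<and> tree_parent v0 Ls w = Loc p n"
  then obtain q s where qs: "w = Loc q s" "exc_time v0 Ls q \<le> s" by (auto simp: tree_vertices_def)
  then obtain s' where s': "s = Suc s'" using w by (cases s) auto
  show "w = Loc p (Suc n) \<or> (\<exists>x. (p, x) \<in> set (Ls ! n) \<and> w = Loc x (Suc n))"
  proof (cases "exc_time v0 Ls q \<le> s'")
    case True
    then show ?thesis using w qs s' by auto
  next
    case False
    then have "exc_time v0 Ls q = Suc s'" using qs s' by simp
    then obtain c where c: "s' < D" "(c, q) \<in> set (Ls ! s')" by (rule exc_time_SucE)
    then show ?thesis using w qs s' tree_parent_target by auto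
  qed
next
  assume "w = Loc p (Suc n) \<or> (\<exists>x. (p, x) \<in> set (Ls ! n) \<and> w = Loc x (Suc n))"
  then show "w \<in> tree_vertices v0 Ls \<and> tree_parent v0 Ls w = Loc p n"
    using p n exc_time_target tree_parent_target by (auto simp: tree_vertices_def)
qed

sublocale parent_tree "tree_parent v0 Ls" node_level "tree_vertices v0 Ls" Start "Loc v0 0"
proof
  fix v show "node_level (tree_parent v0 Ls v) = node_level v - 1"
    by (cases "(v0, Ls, v)" rule: tree_parent.cases) auto
next
  fix v :: "'q node" assume "node_level v = 0" then show "v = Start" by (cases v) auto
next
  fix w assume w: "w \<in> tree_vertices v0 Ls" "0 < node_level (tree_parent v0 Ls w)"
  then obtain q t where qt: "w = Loc q t" "exc_time v0 Ls q \<le> t" "t \<le> D"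
    by (auto simp: tree_vertices_def)
  with w(2) obtain s where "t = Suc s" by (cases t) auto
  with qt have qs: "w = Loc q (Suc s)" "exc_time v0 Ls q \<le> Suc s" "Suc s \<le> D" by simp_all
  show "tree_parent v0 Ls w \<in> tree_vertices v0 Ls"
  proof (cases "exc_time v0 Ls q \<le> s")
    case True
    then show ?thesis using qs by (auto simp: tree_vertices_def)
  next
    case False
    then have "exc_time v0 Ls q = Suc s" using qs by simp
    then obtain c where c: "s < D" "(c, q) \<in> set (Ls ! s)" by (rule exc_time_SucE)
    then have "exc_time v0 Ls c \<le> s" using gate_excitation excited_iff_exc_time by blast
    then show ?thesis using qs c tree_parent_target by (auto simp: tree_vertices_def)
  qed
qed (auto simp: tree_vertices_def exc_time_root dest: exc_time_eq_0)

lemma parent_edge_in_tree_edges: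
  assumes w: "w \<in> tree_vertices v0 Ls"
  shows "{tree_parent v0 Ls w, w} \<in> tree_edges v0 Ls"
proof -
  obtain q s where qs: "w = Loc q s" "exc_time v0 Ls q \<le> s" "s \<le> D"
    using w by (auto simp: tree_vertices_def)
  show ?thesis
  proof (cases s)
    case 0
    then have "q = v0" using qs exc_time_eq_0 by simp
    then show ?thesis using qs 0 root_edge_in_tree_edges by simp
  next
    case (Suc t)
    show ?thesis
    proof (cases "exc_time v0 Ls q \<le> t")
      case True
      then show ?thesis using qs Suc wire_edge_in_tree_edges[of v0 Ls q t] by simp
    next
      case False
      then have "exc_time v0 Ls q = Suc t" using qs Suc by simp
      then obtain c where c: "t < D" "(c, q) \<in> set (Ls ! t)" by (rule exc_time_SucE)
      then show ?thesis using qs Suc tree_parent_target gate_edge_in_tree_edges[OF c] by simp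
    qed
  qed
qed

lemma tree_edges_eq: "tree_edges v0 Ls = parent_edges (tree_parent v0 Ls) (tree_vertices v0 Ls)"
proof
  show "tree_edges v0 Ls \<subseteq> parent_edges (tree_parent v0 Ls) (tree_vertices v0 Ls)"
  proof
    fix e assume "e \<in> tree_edges v0 Ls"
    then consider "e = {Start, Loc v0 0}"
      | q t where "e = {Loc q t, Loc q (Suc t)}" "exc_time v0 Ls q \<le> t" "t < D"
      | c x t where "e = {Loc c t, Loc x (Suc t)}" "t < D" "(c, x) \<in> set (Ls ! t)"
      unfolding tree_edges_def by blast
    then obtain w where "w \<in> tree_vertices v0 Ls" "e = {tree_parent v0 Ls w, w}"
    proof cases
      case 1
      then show ?thesis using that[of "Loc v0 0"] root_in_vertices by simp
    next
      case (2 q t)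
      then show ?thesis using that[of "Loc q (Suc t)"] by (auto simp: tree_vertices_def)
    next
      case (3 c x t)
      then show ?thesis using that[of "Loc x (Suc t)"] tree_parent_target exc_time_target
        by (auto simp: tree_vertices_def)
    qed
    then show "e \<in> parent_edges (tree_parent v0 Ls) (tree_vertices v0 Ls)"
      unfolding parent_edges_def by blast
  qed
next
  show "parent_edges (tree_parent v0 Ls) (tree_vertices v0 Ls) \<subseteq> tree_edges v0 Ls"
    using parent_edge_in_tree_edges unfolding parent_edges_def by blast
qed

lemma leaf_in_tree_vertices: "Loc k D \<in> tree_vertices v0 Ls"
  using excited_iff_exc_time[of k D] excited_length by (auto simp: tree_vertices_def)

lemma leaves_below_length: "leaves_below v0 Ls (Loc p D) = {p}"
  using descendants_level_eq[of "Loc _ D" "Loc p D"] by (auto simp: leaves_below_def)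

lemma leaves_below_disjoint:
  "p \<noteq> x \<Longrightarrow> leaves_below v0 Ls (Loc p n) \<inter> leaves_below v0 Ls (Loc x n) = {}"
  using descendants_same_level[of _ "Loc p n" "Loc x n"] by (auto simp: leaves_below_def)

lemma leaves_below_Suc:
  assumes p: "exc_time v0 Ls p \<le> n" and n: "n < D"
  shows "leaves_below v0 Ls (Loc p n) = leaves_below v0 Ls (Loc p (Suc n))
     \<union> (\<Union>x \<in> {x. (p, x) \<in> set (Ls ! n)}. leaves_below v0 Ls (Loc x (Suc n)))"
proof -
  have "Loc k D \<in> desc (Loc p n) \<longleftrightarrow>
      (\<exists>w. (w = Loc p (Suc n) \<or> (\<exists>x. (p, x) \<in> set (Ls ! n) \<and> w = Loc x (Suc n)))
        \<and> Loc k D \<in> desc w)" for k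
  proof -
    have "Loc k D \<in> desc (Loc p n) \<longleftrightarrow>
        (\<exists>w \<in> tree_vertices v0 Ls. tree_parent v0 Ls w = Loc p n \<and> Loc k D \<in> desc w)"
      using descendants_iff_child[OF leaf_in_tree_vertices] n by simp
    then show ?thesis using tree_parent_child_iff[OF p n] by blast
  qed
  then show ?thesis unfolding leaves_below_def by blast
qed

lemma leaves_below_control:
  assumes n: "n < D" and x: "(p, x) \<in> set (Ls ! n)"
  shows "leaves_below v0 Ls (Loc p n)
      = leaves_below v0 Ls (Loc p (Suc n)) \<union> leaves_below v0 Ls (Loc x (Suc n))"
    and "leaves_below v0 Ls (Loc p (Suc n)) \<inter> leaves_below v0 Ls (Loc x (Suc n)) = {}"
proof -
  have "exc_time v0 Ls p \<le> n" "p \<noteq> x"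
    using gate_excitation[OF n x] excited_iff_exc_time by blast+
  moreover have "{x'. (p, x') \<in> set (Ls ! n)} = {x}"
    using layer_gate_unique[OF distinct_layer_qubits[OF n] _ x] x by auto
  ultimately show "leaves_below v0 Ls (Loc p n)
      = leaves_below v0 Ls (Loc p (Suc n)) \<union> leaves_below v0 Ls (Loc x (Suc n))"
      "leaves_below v0 Ls (Loc p (Suc n)) \<inter> leaves_below v0 Ls (Loc x (Suc n)) = {}"
    using leaves_below_Suc[OF _ n] leaves_below_disjoint by auto
qed

lemma snd_backprop_iff_odd_leaves:
  assumes "t \<le> D" "exc_time v0 Ls p \<le> t"
  shows "snd (backprop Ls t P) p \<longleftrightarrow> odd (card {k \<in> leaves_below v0 Ls (Loc p t). snd P k})"
  using assms
proof (induction t arbitrary: p rule: inc_induct)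
  case base
  have "{k \<in> leaves_below v0 Ls (Loc p D). snd P k} = (if snd P p then {p} else {})"
    by (auto simp: leaves_below_length)
  then show ?case by simp
next
  case (step n)
  let ?R = "backprop Ls (Suc n) P"
  let ?S = "\<lambda>u. {k \<in> leaves_below v0 Ls u. snd P k}"
  have bp: "backprop Ls n P = layer_conj (Ls ! n) ?R" by (rule backprop_Suc[OF step(2)])
  show ?case
  proof (cases "\<exists>x. (p, x) \<in> set (Ls ! n)")
    case True
    then obtain x where x: "(p, x) \<in> set (Ls ! n)" by blast
    have "?S (Loc p n) = ?S (Loc p (Suc n)) \<union> ?S (Loc x (Suc n))"
      "?S (Loc p (Suc n)) \<inter> ?S (Loc x (Suc n)) = {}"
      using leaves_below_control[OF step(2) x] by auto
    then have "odd (card (?S (Loc p n)))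
        \<longleftrightarrow> odd (card (?S (Loc p (Suc n)))) \<noteq> odd (card (?S (Loc x (Suc n))))"
      by (simp add: card_Un_disjoint)
    moreover have "snd (backprop Ls n P) p \<longleftrightarrow> snd ?R p \<noteq> snd ?R x"
      unfolding bp by (rule snd_layer_conj_control[OF distinct_layer_qubits[OF step(2)] x])
    ultimately show ?thesis
      using step(3)[of p] step(3)[of x] step(4) exc_time_target[OF step(2) x] by simp
  next
    case False
    then have "?S (Loc p n) = ?S (Loc p (Suc n))"
      using leaves_below_Suc[OF step(4,2)] by simp
    moreover have "snd (backprop Ls n P) p = snd ?R p"
      unfolding bp using False by (simp add: snd_layer_conj_idle)
    ultimately show ?thesis using step(3)[of p] step(4) by simp
  qed
qed

lemma loc_edge_eq:
  assumes "exc_time v0 Ls q \<le> t" "t \<le> D"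
  shows "loc_edge v0 Ls q t = {tree_parent v0 Ls (Loc q t), Loc q t}"
  using path_edge_at_eq_parent_edge[of "Loc q t"] assms
  unfolding loc_edge_def tree_edges_eq by (auto simp: tree_vertices_def)

lemma loc_edge_in_S_set_iff:
  assumes "exc_time v0 Ls q \<le> t" "t \<le> D"
  shows "loc_edge v0 Ls q t \<in> S_set v0 Ls i j
    \<longleftrightarrow> (i \<in> leaves_below v0 Ls (Loc q t)) \<noteq> (j \<in> leaves_below v0 Ls (Loc q t))"
proof -
  have "Loc q t \<in> tree_vertices v0 Ls" using assms by (auto simp: tree_vertices_def)
  from parent_edge_in_lca_paths_iff[OF this leaf_in_tree_vertices leaf_in_tree_vertices]
  show ?thesis
    unfolding loc_edge_eq[OF assms] S_set_def Let_def tree_edges_eq leaves_below_def by simp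
qed

lemma detected_iff:
  assumes "exc_time v0 Ls q \<le> t" "t \<le> D" "E = X_at q \<or> E = Y_at q" "i \<noteq> j"
  shows "detected Ls E t i j
    \<longleftrightarrow> (i \<in> leaves_below v0 Ls (Loc q t)) \<noteq> (j \<in> leaves_below v0 Ls (Loc q t))"
proof -
  have ZZ: "fst (ZZ i j) = (\<lambda>_. False)" by (simp add: ZZ_def)
  have "fst E = (\<lambda>p. p = q)" using assms(3) by (auto simp: X_at_def Y_at_def)
  then have "detected Ls E t i j \<longleftrightarrow> snd (backprop Ls t (ZZ i j)) q"
    unfolding detected_def using anticommute_Z_string fst_backprop_Z_string[OF ZZ] by blast
  also have "\<dots> \<longleftrightarrow> odd (card {k \<in> leaves_below v0 Ls (Loc q t). snd (ZZ i j) k})"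
    using snd_backprop_iff_odd_leaves[OF assms(2,1)] .
  finally show ?thesis using odd_card_ZZ[OF assms(4)] by simp
qed

end

theorem lemma1:
  fixes v0 i j q :: "'q::finite" and Ls :: "'q layer list" and t :: nat and E :: "'q pauli"
  assumes "ghz_circuit v0 Ls"
    and "i \<noteq> j"
    and "exc_time v0 Ls q \<le> t" and "t \<le> length Ls"
    and "E = X_at q \<or> E = Y_at q"
  shows "detected Ls E t i j \<longleftrightarrow> loc_edge v0 Ls q t \<in> S_set v0 Ls i j"
proof -
  interpret ghz_prep_circuit v0 Ls by (rule ghz_prep_circuit.intro) (rule assms(1))
  show ?thesis
    using detected_iff[OF assms(3-5,2)] loc_edge_in_S_set_iff[OF assms(3,4)] by simp
qed

end
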